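(* With the Riccati operator $\mathscr R$ and the RADI iterates $X_1,X_2$, residual factors $R_1,R_2\in\mathbb{R}^{d\times r}$, inner factor $T$ and $\tilde Y_2$ as in the context, suppose $T$ is positive semi-definite. Let $\gamma_1,\gamma_2\in\mathbb{R}$ with $\gamma_1+\gamma_2=1$. Then the residual of the two-term extrapolant, $$\mathscr R(\gamma_1X_1+\gamma_2X_2)=[\,R_1\ R_2\,]\,\mathscr H_2\,[\,R_1\ R_2\,]^{\mathsf T},\qquad \mathscr H_2=\begin{bmatrix}\gamma_1^2T+\gamma_1\gamma_2\tilde Y_2 & \gamma_1\gamma_2(T-\tilde Y_2)\\ \gamma_1\gamma_2(T-\tilde Y_2) & \gamma_2^2T+\gamma_1\gamma_2\tilde Y_2\end{bmatrix},$$ is positive semi-definite if and only if $0\le\gamma_1,\gamma_2\le1$.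
   Context: Data: $A,E\in\mathbb{R}^{d\times d}$, $B\in\mathbb{R}^{d\times p}$, $C\in\mathbb{R}^{q\times d}$, $H\in\mathbb{R}^{p\times p}$ symmetric positive definite, and $\mathscr R(X)=A^{\mathsf T}XE+E^{\mathsf T}XA+C^{\mathsf T}C-E^{\mathsf T}XBH^{-1}B^{\mathsf T}XE$. RADI step: start from $X_1$ with $\mathscr R(X_1)=R_1TR_1^{\mathsf T}$, $R_1\in\mathbb{R}^{d\times r}$, $T=T^{\mathsf T}\in\mathbb{R}^{r\times r}$; with a shift $\sigma_1<0$ set $V_2=\sqrt{-2\sigma_1}(A^{\mathsf T}-E^{\mathsf T}X_1BH^{-1}B^{\mathsf T}+\sigma_1E^{\mathsf T})^{-1}R_1T$, $\tilde Y_2=T-\frac{1}{2\sigma_1}(V_2^{\mathsf T}B)H^{-1}(V_2^{\mathsf T}B)^{\mathsf T}$, $X_2=X_1+V_2\tilde Y_2^{-1}V_2^{\mathsf T}$, $R_2=R_1+\sqrt{-2\sigma_1}E^{\mathsf T}V_2\tilde Y_2^{-1}$ (inverses assumed to exist); then $\mathscr R(X_2)=R_2TR_2^{\mathsf T}$. The displayed factorization with $\mathscr H_2$ (using $\gamma_2-\gamma_2^2=\gamma_1\gamma_2$) holds for all $\gamma_1+\gamma_2=1$. *)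

theory Defs
  imports "HOL-Analysis.Analysis"
begin

definition riccati ::
  "real^'d^'d \<Rightarrow> real^'d^'d \<Rightarrow> real^'p^'d \<Rightarrow> real^'d^'q \<Rightarrow> real^'p^'p \<Rightarrow> real^'d^'d \<Rightarrow> real^'d^'d" where
  "riccati A E B C H X =
     transpose A ** X ** E + transpose E ** X ** A + transpose C ** C
     - transpose E ** X ** B ** matrix_inv H ** transpose B ** X ** E"

definition sym_mat :: "real^'n^'n \<Rightarrow> bool" where
  "sym_mat M \<longleftrightarrow> transpose M = M"

definition psd :: "real^'n^'n \<Rightarrow> bool" where
  "psd M \<longleftrightarrow> sym_mat M \<and> (\<forall>x. 0 \<le> x \<bullet> (M *v x))"

definition pd :: "real^'n^'n \<Rightarrow> bool" where
  "pd M \<longleftrightarrow> sym_mat M \<and> (\<forall>x. x \<noteq> 0 \<longrightarrow> 0 < x \<bullet> (M *v x))"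

definition hcat :: "real^'r^'d \<Rightarrow> real^'s^'d \<Rightarrow> real^('r + 's)^'d" where
  "hcat P Q = (\<chi> i j. case j of Inl k \<Rightarrow> P $ i $ k | Inr k \<Rightarrow> Q $ i $ k)"

definition block2 ::
  "real^'r^'r \<Rightarrow> real^'s^'r \<Rightarrow> real^'r^'s \<Rightarrow> real^'s^'s \<Rightarrow> real^('r + 's)^('r + 's)" where
  "block2 M11 M12 M21 M22 = (\<chi> i j. case i of
       Inl a \<Rightarrow> (case j of Inl b \<Rightarrow> M11 $ a $ b | Inr b \<Rightarrow> M12 $ a $ b)
     | Inr a \<Rightarrow> (case j of Inl b \<Rightarrow> M21 $ a $ b | Inr b \<Rightarrow> M22 $ a $ b))"

end

theory Submission
  imports Defs
begin

text \<open>Write \<open>\<Delta> = X\<^sub>2 - X\<^sub>1 = V\<^sub>2 Y\<^sub>2\<^sup>-\<^sup>1 V\<^sub>2\<^sup>T\<close> and \<open>U = R\<^sub>2 - R\<^sub>1\<close>.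
  Since \<open>\<R>\<close> is quadratic, \<open>\<R>(X\<^sub>1 + t\<Delta>)\<close> is a quadratic polynomial in \<open>t\<close>, and the defining
  relations of the RADI step turn it into
  \<open>(R\<^sub>1 + tU) T (R\<^sub>1 + tU)\<^sup>T + (t - t\<^sup>2) U Y\<^sub>2 U\<^sup>T\<close>.
  At \<open>t = \<gamma>\<^sub>2\<close> this is \<open>[R\<^sub>1 R\<^sub>2] \<H>\<^sub>2 [R\<^sub>1 R\<^sub>2]\<^sup>T\<close>, and the quadratic form of \<open>\<H>\<^sub>2\<close> at
  \<open>(x, y)\<close> is \<open>(\<gamma>\<^sub>1x + \<gamma>\<^sub>2y)\<^sup>T T (\<gamma>\<^sub>1x + \<gamma>\<^sub>2y) + \<gamma>\<^sub>1\<gamma>\<^sub>2 (x - y)\<^sup>T Y\<^sub>2 (x - y)\<close>.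
  As \<open>T\<close> and the invertible \<open>Y\<^sub>2\<close> are positive semi-definite, this form is nonnegative
  exactly when \<open>\<gamma>\<^sub>1\<gamma>\<^sub>2 \<ge> 0\<close>; the vectors with \<open>\<gamma>\<^sub>1x + \<gamma>\<^sub>2y = 0\<close> witness the converse.\<close>

lemma matrix_add_rdistrib: "((A::'a::semiring_1^'n^'m) + B) ** C = A ** C + B ** C"
  by (simp add: matrix_matrix_mult_def vec_eq_iff sum.distrib distrib_right)

lemma matrix_diff_rdistrib: "((A::'a::ring_1^'n^'m) - B) ** C = A ** C - B ** C"
  by (simp add: matrix_matrix_mult_def vec_eq_iff sum_subtractf left_diff_distrib)

lemma matrix_diff_ldistrib: "(A::'a::ring_1^'n^'m) ** (B - C) = A ** B - A ** C"
  by (simp add: matrix_matrix_mult_def vec_eq_iff sum_subtractf right_diff_distrib)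

lemma transpose_add: "transpose (A + B) = transpose A + transpose (B::'a::semiring_1^'n^'m)"
  by (simp add: transpose_def vec_eq_iff)

lemma transpose_diff: "transpose (A - B) = transpose A - transpose (B::'a::ring_1^'n^'m)"
  by (simp add: transpose_def vec_eq_iff)

lemmas matrix_algebra_simps =
  matrix_add_ldistrib matrix_add_rdistrib matrix_diff_ldistrib matrix_diff_rdistrib
  matrix_scalar_ac scalar_matrix_assoc[symmetric] matrix_mul_assoc
  transpose_add transpose_diff transpose_scalar matrix_transpose_mul transpose_transpose

lemma matrix_inv_inverse:
  assumes "invertible (A::real^'n^'n)"
  shows "A ** matrix_inv A = mat 1" and "matrix_inv A ** A = mat 1"
proof -
  have "\<exists>A'. A ** A' = mat 1 \<and> A' ** A = mat 1" using assms invertible_def by blast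
  then have "A ** matrix_inv A = mat 1 \<and> matrix_inv A ** A = mat 1"
    unfolding matrix_inv_def by (rule someI_ex)
  then show "A ** matrix_inv A = mat 1" and "matrix_inv A ** A = mat 1" by auto
qed

lemma matrix_inv_symmetric:
  assumes "transpose A = A" and "invertible (A::real^'n^'n)"
  shows "transpose (matrix_inv A) = matrix_inv A"
proof -
  have "transpose (matrix_inv A) = (matrix_inv A ** A) ** transpose (matrix_inv A)"
    using matrix_inv_inverse(2)[OF assms(2)] by simp
  also have "\<dots> = matrix_inv A ** transpose (matrix_inv A ** A)"
    by (simp add: assms(1) matrix_transpose_mul matrix_mul_assoc)
  also have "\<dots> = matrix_inv A"
    using matrix_inv_inverse(2)[OF assms(2)] by simp
  finally show ?thesis .
qed

lemma inner_matrix_vector_transpose: "x \<bullet> (A *v y) = (transpose A *v x) \<bullet> (y::real^'n)"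
  by (simp add: dot_lmul_matrix)

lemma pd_imp_invertible:
  assumes "pd (H::real^'n^'n)"
  shows "invertible H"
proof -
  have "H *v x = 0 \<Longrightarrow> x = 0" for x
    using assms unfolding pd_def by (metis inner_zero_right order_less_irrefl)
  then obtain G where "G ** H = mat 1" using matrix_left_invertible_ker by blast
  then show ?thesis using invertible_left_inverse by blast
qed

lemma psd_matrix_inv:
  assumes "pd (H::real^'n^'n)"
  shows "psd (matrix_inv H)"
proof -
  have H_inv: "invertible H" using assms by (rule pd_imp_invertible)
  have "0 \<le> w \<bullet> (matrix_inv H *v w)" for w
  proof -
    let ?u = "matrix_inv H *v w"
    have "H *v ?u = w"
      by (simp add: matrix_vector_mul_assoc matrix_inv_inverse(1)[OF H_inv])
    then have "w \<bullet> ?u = ?u \<bullet> (H *v ?u)" by (metis inner_commute)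
    moreover have "0 \<le> ?u \<bullet> (H *v ?u)"
      using assms unfolding pd_def by (cases "?u = 0") (auto simp: less_imp_le)
    ultimately show ?thesis by simp
  qed
  moreover have "transpose (matrix_inv H) = matrix_inv H"
    using assms H_inv by (intro matrix_inv_symmetric) (simp_all add: pd_def sym_mat_def)
  ultimately show ?thesis by (simp add: psd_def sym_mat_def)
qed

lemma psd_add: "psd M \<Longrightarrow> psd N \<Longrightarrow> psd (M + N)"
  by (simp add: psd_def sym_mat_def transpose_add matrix_vector_mult_add_rdistrib inner_add_right)

lemma psd_scaleR: "psd M \<Longrightarrow> 0 \<le> c \<Longrightarrow> psd (c *\<^sub>R M)"
  by (simp add: psd_def sym_mat_def transpose_scalar scaleR_matrix_vector_assoc[symmetric])

lemma psd_congruence: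
  assumes "psd (M::real^'n^'n)"
  shows "psd ((G::real^'n^'m) ** M ** transpose G)"
proof -
  have "x \<bullet> ((G ** M ** transpose G) *v x) = (transpose G *v x) \<bullet> (M *v (transpose G *v x))" for x
    by (simp add: inner_matrix_vector_transpose matrix_vector_mul_assoc[symmetric]
        del: transpose_matrix_vector)
  with assms show ?thesis
    by (simp add: psd_def sym_mat_def matrix_transpose_mul matrix_mul_assoc)
qed

lemma psd_invertible_imp_pos_form:
  assumes "psd (Y::real^'n^'n)" and "invertible Y"
  shows "\<exists>w. 0 < w \<bullet> (Y *v w)"
proof (rule ccontr)
  assume "\<not> ?thesis"
  with assms(1) have form_zero: "w \<bullet> (Y *v w) = 0" for w
    unfolding psd_def by (meson not_less order_antisym)
  have sym: "y \<bullet> (Y *v x) = x \<bullet> (Y *v y)" for x y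
    using assms(1) by (metis dot_lmul_matrix inner_commute psd_def sym_mat_def transpose_matrix_vector)
  have "x \<bullet> (Y *v y) = 0" for x y
    using form_zero[of "x + y"] form_zero[of x] form_zero[of y] sym[of x y]
    by (simp add: matrix_vector_right_distrib inner_add_left inner_add_right)
  then have "Y *v y = 0" for y by (metis inner_eq_zero_iff)
  then have "(1::real^'n) = 0"
    using matrix_inv_inverse(1)[OF assms(2)] by (metis matrix_vector_mul_assoc matrix_vector_mul_lid)
  then show False by (simp add: vec_eq_iff)
qed

lemma psd_diff_scaled_congruence_inverse:
  assumes "psd T" and "pd H" and "c \<le> 0"
  shows "psd (T - c *\<^sub>R (M ** matrix_inv H ** transpose M))"
proof -
  have "psd ((- c) *\<^sub>R (M ** matrix_inv H ** transpose M))"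
    using assms by (intro psd_scaleR psd_congruence psd_matrix_inv) simp_all
  from psd_add[OF assms(1) this] show ?thesis by simp
qed

lemma sum_UNIV_Plus:
  "sum f (UNIV :: ('a::finite + 'b::finite) set) = (\<Sum>k\<in>UNIV. f (Inl k)) + (\<Sum>k\<in>UNIV. f (Inr k))"
  by (subst UNIV_Plus_UNIV[symmetric], subst sum.Plus) (simp_all add: o_def)

lemma hcat_mult_block2:
  "hcat P Q ** block2 M11 M12 M21 M22 = hcat (P ** M11 + Q ** M21) (P ** M12 + Q ** M22)"
  by (simp add: hcat_def block2_def matrix_matrix_mult_def vec_eq_iff sum_UNIV_Plus split: sum.split)

lemma hcat_mult_transpose_hcat:
  "hcat P Q ** transpose (hcat P' Q') = P ** transpose P' + Q ** transpose Q'"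
  by (simp add: hcat_def transpose_def matrix_matrix_mult_def vec_eq_iff sum_UNIV_Plus)

lemma block2_quadratic_form:
  "z \<bullet> (block2 M11 M12 M21 M22 *v z) =
     x \<bullet> (M11 *v x) + x \<bullet> (M12 *v y) + y \<bullet> (M21 *v x) + y \<bullet> (M22 *v y)"
  if "x = (\<chi> k. z $ Inl k)" and "y = (\<chi> k. z $ Inr k)"
  using that by (simp add: block2_def inner_vec_def matrix_vector_mult_def sum_UNIV_Plus
      sum_distrib_left algebra_simps sum.distrib)

lemma transpose_block2:
  "transpose (block2 M11 M12 M21 M22) =
     block2 (transpose M11) (transpose M21) (transpose M12) (transpose M22)"
  by (simp add: transpose_def block2_def vec_eq_iff split: sum.split)

definition extrapolation_kernel ::
  "real \<Rightarrow> real \<Rightarrow> real^'r^'r \<Rightarrow> real^'r^'r \<Rightarrow> real^('r + 'r)^('r + 'r)" where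
  "extrapolation_kernel g1 g2 T Y =
     block2 (g1\<^sup>2 *\<^sub>R T + (g1 * g2) *\<^sub>R Y) ((g1 * g2) *\<^sub>R (T - Y))
            ((g1 * g2) *\<^sub>R (T - Y)) (g2\<^sup>2 *\<^sub>R T + (g1 * g2) *\<^sub>R Y)"

lemma hcat_extrapolation_kernel:
  "hcat R1 R2 ** extrapolation_kernel g1 g2 T Y ** transpose (hcat R1 R2)
     = (g1 *\<^sub>R R1 + g2 *\<^sub>R R2) ** T ** transpose (g1 *\<^sub>R R1 + g2 *\<^sub>R R2)
       + (g1 * g2) *\<^sub>R ((R2 - R1) ** Y ** transpose (R2 - R1))"
  by (simp add: extrapolation_kernel_def hcat_mult_block2 hcat_mult_transpose_hcat
      matrix_algebra_simps vec_eq_iff algebra_simps power2_eq_square)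

lemma extrapolation_kernel_quadratic_form:
  fixes T Y :: "real^'r^'r" and x y :: "real^'r"
  assumes "sym_mat T" and "sym_mat Y"
    and "x = (\<chi> k. z $ Inl k)" and "y = (\<chi> k. z $ Inr k)"
  shows "z \<bullet> (extrapolation_kernel g1 g2 T Y *v z)
     = (g1 *\<^sub>R x + g2 *\<^sub>R y) \<bullet> (T *v (g1 *\<^sub>R x + g2 *\<^sub>R y)) + (g1 * g2) * ((x - y) \<bullet> (Y *v (x - y)))"
proof -
  have "y \<bullet> (M *v x) = x \<bullet> (M *v y)" if "sym_mat M" for M :: "real^'r^'r"
    using that by (metis dot_lmul_matrix inner_commute sym_mat_def transpose_matrix_vector)
  with assms show ?thesis
    unfolding extrapolation_kernel_def block2_quadratic_form[OF assms(3,4)]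
    by (simp add: scaleR_matrix_vector_assoc[symmetric] algebra_simps inner_add_left inner_add_right
        inner_diff_left inner_diff_right power2_eq_square)
qed

lemma psd_extrapolation_kernel_iff:
  fixes T Y :: "real^'r^'r"
  assumes T: "psd T" and Y: "psd Y" and w: "0 < w \<bullet> (Y *v w)" and sum: "g1 + g2 = 1"
  shows "psd (extrapolation_kernel g1 g2 T Y) \<longleftrightarrow> 0 \<le> g1 \<and> g1 \<le> 1 \<and> 0 \<le> g2 \<and> g2 \<le> 1"
proof -
  have sym: "sym_mat T" "sym_mat Y" using T Y by (simp_all add: psd_def)
  note form = extrapolation_kernel_quadratic_form[OF sym]
  show ?thesis
  proof
    assume psd: "psd (extrapolation_kernel g1 g2 T Y)"
    define z :: "real^('r + 'r)"
      where "z = (\<chi> k. case k of Inl i \<Rightarrow> g2 * w $ i | Inr i \<Rightarrow> - g1 * w $ i)"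
    have "z \<bullet> (extrapolation_kernel g1 g2 T Y *v z)
        = (g1 *\<^sub>R (g2 *\<^sub>R w) + g2 *\<^sub>R ((- g1) *\<^sub>R w)) \<bullet> (T *v (g1 *\<^sub>R (g2 *\<^sub>R w) + g2 *\<^sub>R ((- g1) *\<^sub>R w)))
          + (g1 * g2) * ((g2 *\<^sub>R w - (- g1) *\<^sub>R w) \<bullet> (Y *v (g2 *\<^sub>R w - (- g1) *\<^sub>R w)))"
      by (rule form) (simp_all add: z_def vec_eq_iff)
    also have "g1 *\<^sub>R (g2 *\<^sub>R w) + g2 *\<^sub>R ((- g1) *\<^sub>R w) = 0" by simp
    also have "g2 *\<^sub>R w - (- g1) *\<^sub>R w = w"
      using sum by (simp add: algebra_simps flip: scaleR_add_left)
    finally have "z \<bullet> (extrapolation_kernel g1 g2 T Y *v z) = (g1 * g2) * (w \<bullet> (Y *v w))" by simp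
    moreover have "0 \<le> z \<bullet> (extrapolation_kernel g1 g2 T Y *v z)" using psd by (simp add: psd_def)
    ultimately have "0 \<le> g1 * g2" using w by (simp add: zero_le_mult_iff)
    with sum show "0 \<le> g1 \<and> g1 \<le> 1 \<and> 0 \<le> g2 \<and> g2 \<le> 1"
      by (smt (verit) mult_pos_neg mult_neg_pos)
  next
    assume "0 \<le> g1 \<and> g1 \<le> 1 \<and> 0 \<le> g2 \<and> g2 \<le> 1"
    then have "0 \<le> g1 * g2" by simp
    with T Y have "0 \<le> z \<bullet> (extrapolation_kernel g1 g2 T Y *v z)" for z
      unfolding form[OF refl refl] psd_def by (simp add: add_nonneg_nonneg mult_nonneg_nonneg)
    moreover have "sym_mat (extrapolation_kernel g1 g2 T Y)"
      using sym by (simp add: extrapolation_kernel_def sym_mat_def transpose_block2 transpose_add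
          transpose_diff transpose_scalar)
    ultimately show "psd (extrapolation_kernel g1 g2 T Y)" by (simp add: psd_def)
  qed
qed

text \<open>The transpose of the closed-loop matrix \<open>A - B H\<^sup>-\<^sup>1 B\<^sup>T X E\<close> when \<open>X\<close> and \<open>H\<close> are symmetric.\<close>

definition closed_loop ::
  "real^'d^'d \<Rightarrow> real^'d^'d \<Rightarrow> real^'p^'d \<Rightarrow> real^'p^'p \<Rightarrow> real^'d^'d \<Rightarrow> real^'d^'d" where
  "closed_loop A E B H X = transpose A - transpose E ** X ** B ** matrix_inv H ** transpose B"

lemma riccati_add_scaled:
  fixes X D :: "real^'d^'d"
  assumes "transpose X = X" and "transpose (matrix_inv H) = matrix_inv H"
  shows "riccati A E B C H (X + t *\<^sub>R D) =
     riccati A E B C H X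
     + t *\<^sub>R (closed_loop A E B H X ** D ** E + transpose E ** D ** transpose (closed_loop A E B H X))
     - t\<^sup>2 *\<^sub>R (transpose E ** D ** B ** matrix_inv H ** transpose B ** D ** E)"
  unfolding riccati_def closed_loop_def
  by (simp add: matrix_algebra_simps assms algebra_simps power2_eq_square)

lemma riccati_radi_update:
  fixes X :: "real^'d^'d" and R U V :: "real^'r^'d" and T Y :: "real^'r^'r"
  assumes X_sym: "transpose X = X" and Hinv_sym: "transpose (matrix_inv H) = matrix_inv H"
    and T_sym: "transpose T = T" and Y_sym: "transpose Y = Y" and Y_inv: "invertible Y"
    and res: "riccati A E B C H X = R ** T ** transpose R"
    and FV: "(closed_loop A E B H X + \<sigma> *\<^sub>R transpose E) ** V = s *\<^sub>R (R ** T)"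
    and s_sq: "s\<^sup>2 = - 2 * \<sigma>"
    and VGV: "transpose V ** B ** matrix_inv H ** transpose B ** V = (2 * \<sigma>) *\<^sub>R (T - Y)"
    and U_def: "U = s *\<^sub>R (transpose E ** V ** matrix_inv Y)"
  shows "riccati A E B C H (X + t *\<^sub>R (V ** matrix_inv Y ** transpose V))
    = (R + t *\<^sub>R U) ** T ** transpose (R + t *\<^sub>R U) + (t - t\<^sup>2) *\<^sub>R (U ** Y ** transpose U)"
proof -
  define W where "W = transpose E ** V ** matrix_inv Y"
  have Yinv_sym: "transpose (matrix_inv Y) = matrix_inv Y"
    using Y_sym Y_inv by (rule matrix_inv_symmetric)
  \<comment> \<open>\<open>cancel\<close> and \<open>VGV'\<close> carry a left factor \<open>M\<close> so that they match the left-associated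
     products produced by \<open>matrix_algebra_simps\<close>.\<close>
  have cancel: "M ** matrix_inv Y ** Y = M" for M :: "real^'r^'k"
    by (simp add: matrix_inv_inverse(2)[OF Y_inv] flip: matrix_mul_assoc)
  have W_tr: "transpose W = matrix_inv Y ** transpose V ** E"
    by (simp add: W_def matrix_algebra_simps Yinv_sym)
  have LV: "closed_loop A E B H X ** V = s *\<^sub>R (R ** T) - \<sigma> *\<^sub>R (transpose E ** V)"
    using FV by (simp add: matrix_algebra_simps algebra_simps)
  have lin: "closed_loop A E B H X ** (V ** matrix_inv Y ** transpose V) ** E
      = s *\<^sub>R (R ** T ** transpose W) - \<sigma> *\<^sub>R (W ** Y ** transpose W)"
    unfolding W_tr by (simp add: LV matrix_algebra_simps W_def cancel)
  have quad: "transpose E ** (V ** matrix_inv Y ** transpose V) ** B ** matrix_inv H ** transpose B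
        ** (V ** matrix_inv Y ** transpose V) ** E = (2 * \<sigma>) *\<^sub>R (W ** (T - Y) ** transpose W)"
  proof -
    have "M ** (transpose V ** B ** matrix_inv H ** transpose B ** V) = M ** ((2 * \<sigma>) *\<^sub>R (T - Y))"
      for M :: "real^'r^'d"
      using VGV by simp
    then have VGV': "M ** transpose V ** B ** matrix_inv H ** transpose B ** V
        = (2 * \<sigma>) *\<^sub>R (M ** T) - (2 * \<sigma>) *\<^sub>R (M ** Y)" for M :: "real^'r^'d"
      by (simp add: matrix_algebra_simps)
    show ?thesis
      unfolding W_tr by (simp add: VGV' matrix_algebra_simps W_def scaleR_diff_right)
  qed
  have lin_tr: "transpose E ** (V ** matrix_inv Y ** transpose V) ** transpose (closed_loop A E B H X)
      = s *\<^sub>R (W ** T ** transpose R) - \<sigma> *\<^sub>R (W ** Y ** transpose W)"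
    using arg_cong[OF lin, of transpose]
    by (simp add: matrix_algebra_simps Yinv_sym T_sym Y_sym)
  have U_W: "U = s *\<^sub>R W" by (simp add: U_def W_def)
  have \<sigma>: "\<sigma> = - s\<^sup>2 / 2" using s_sq by simp
  show ?thesis
    unfolding riccati_add_scaled[OF X_sym Hinv_sym] res lin lin_tr quad U_W
    by (simp add: matrix_algebra_simps vec_eq_iff algebra_simps power2_eq_square \<sigma> T_sym Y_sym)
qed

theorem theorem3:
  fixes A E X1 X2 :: "real^'d^'d"
    and B :: "real^'p^'d" and C :: "real^'d^'q" and H :: "real^'p^'p"
    and R1 R2 V2 :: "real^'r^'d" and T Y2 :: "real^'r^'r"
    and \<sigma>1 \<gamma>1 \<gamma>2 :: real
  assumes H_pd: "pd H"
    and X1_sym: "sym_mat X1"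
    and T_psd: "psd T"
    and res1: "riccati A E B C H X1 = R1 ** T ** transpose R1"
    and shift: "\<sigma>1 < 0"
    and inv_F: "invertible (transpose A - transpose E ** X1 ** B ** matrix_inv H ** transpose B
                            + \<sigma>1 *\<^sub>R transpose E)"
    and V2_def: "V2 = sqrt (-2 * \<sigma>1) *\<^sub>R
                   (matrix_inv (transpose A - transpose E ** X1 ** B ** matrix_inv H ** transpose B
                                + \<sigma>1 *\<^sub>R transpose E) ** R1 ** T)"
    and Y2_def: "Y2 = T - (1 / (2 * \<sigma>1)) *\<^sub>R
                   ((transpose V2 ** B) ** matrix_inv H ** transpose (transpose V2 ** B))"
    and inv_Y2: "invertible Y2"
    and X2_def: "X2 = X1 + V2 ** matrix_inv Y2 ** transpose V2"
    and R2_def: "R2 = R1 + sqrt (-2 * \<sigma>1) *\<^sub>R (transpose E ** V2 ** matrix_inv Y2)"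
    and sum1: "\<gamma>1 + \<gamma>2 = 1"
  shows "let H2 = block2 (\<gamma>1\<^sup>2 *\<^sub>R T + (\<gamma>1 * \<gamma>2) *\<^sub>R Y2) ((\<gamma>1 * \<gamma>2) *\<^sub>R (T - Y2))
                         ((\<gamma>1 * \<gamma>2) *\<^sub>R (T - Y2)) (\<gamma>2\<^sup>2 *\<^sub>R T + (\<gamma>1 * \<gamma>2) *\<^sub>R Y2);
             Res = riccati A E B C H (\<gamma>1 *\<^sub>R X1 + \<gamma>2 *\<^sub>R X2)
         in Res = hcat R1 R2 ** H2 ** transpose (hcat R1 R2)
            \<and> (psd H2 \<longleftrightarrow> (0 \<le> \<gamma>1 \<and> \<gamma>1 \<le> 1 \<and> 0 \<le> \<gamma>2 \<and> \<gamma>2 \<le> 1))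
            \<and> ((0 \<le> \<gamma>1 \<and> \<gamma>1 \<le> 1 \<and> 0 \<le> \<gamma>2 \<and> \<gamma>2 \<le> 1) \<longrightarrow> psd Res)"
proof -
  define s where "s = sqrt (-2 * \<sigma>1)"
  have Hinv_tr: "transpose (matrix_inv H) = matrix_inv H"
    using psd_matrix_inv[OF H_pd] by (simp add: psd_def sym_mat_def)
  have X1_tr: "transpose X1 = X1" and T_tr: "transpose T = T"
    using X1_sym T_psd by (simp_all add: psd_def sym_mat_def)
  have Y2_psd: "psd Y2"
    unfolding Y2_def using shift
    by (intro psd_diff_scaled_congruence_inverse T_psd H_pd) (simp add: divide_simps)
  have FV: "(closed_loop A E B H X1 + \<sigma>1 *\<^sub>R transpose E) ** V2 = s *\<^sub>R (R1 ** T)"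
    unfolding V2_def closed_loop_def s_def
    by (simp add: matrix_scalar_ac scalar_matrix_assoc[symmetric] matrix_mul_assoc
        matrix_inv_inverse(1)[OF inv_F])
  have VGV: "transpose V2 ** B ** matrix_inv H ** transpose B ** V2 = (2 * \<sigma>1) *\<^sub>R (T - Y2)"
    using shift by (simp add: Y2_def matrix_transpose_mul matrix_mul_assoc)
  have \<gamma>1: "\<gamma>1 = 1 - \<gamma>2" using sum1 by simp
  have "\<gamma>1 *\<^sub>R X1 + \<gamma>2 *\<^sub>R X2 = X1 + \<gamma>2 *\<^sub>R (V2 ** matrix_inv Y2 ** transpose V2)"
    and "R1 + \<gamma>2 *\<^sub>R (R2 - R1) = \<gamma>1 *\<^sub>R R1 + \<gamma>2 *\<^sub>R R2" and "\<gamma>2 - \<gamma>2\<^sup>2 = \<gamma>1 * \<gamma>2"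
    by (simp_all add: \<gamma>1 X2_def algebra_simps power2_eq_square)
  then have residual: "riccati A E B C H (\<gamma>1 *\<^sub>R X1 + \<gamma>2 *\<^sub>R X2)
      = hcat R1 R2 ** extrapolation_kernel \<gamma>1 \<gamma>2 T Y2 ** transpose (hcat R1 R2)"
    using riccati_radi_update[OF X1_tr Hinv_tr T_tr _ inv_Y2 res1 FV _ VGV, of "R2 - R1" \<gamma>2]
      Y2_psd shift
    by (simp add: hcat_extrapolation_kernel R2_def s_def psd_def sym_mat_def)
  show ?thesis
    unfolding Let_def extrapolation_kernel_def[symmetric] residual
    using psd_extrapolation_kernel_iff[OF T_psd Y2_psd _ sum1] psd_congruence
      psd_invertible_imp_pos_form[OF Y2_psd inv_Y2]
    by blast
qed

end
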